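(* Let $\ell>0$ and let $\{\rho_k\}_{k\ge1}$, $\{\sigma_k\}_{k\ge2}$ be real constants satisfying $$\lim_{k\to\infty}\left|\frac{\sigma_{k+1}}{\sigma_k}\right|<\frac{1}{2\ell},\qquad \lim_{k\to\infty}\left|\frac{\rho_{k+1}}{\rho_k}\right|<\frac{1}{2\ell}.$$ Then for all $x\in[0,\infty)$ and $\xi\in[-1,1]$ the series $$\alpha(x,\xi)=\sum_{k=1}^\infty \rho_k\,\mathcal{P}_k(x)\,P^0_k(\xi)\,(x\ell)^k,\qquad \omega(x,\xi)=\sqrt{1-\xi^2}+\sum_{k=2}^\infty \sigma_k\,\mathcal{S}_k(x)\,P^1_{k-1}(\xi)\,(x\ell)^k$$ converge.
   Context: $\mathcal{P}_k(x)={}_2F_1\!\left(\frac{k}{2},\frac{k+1}{2};\frac{2k+3}{2};-x^2\right)$ and $\mathcal{S}_k(x)={}_2F_1\!\left(\frac{k}{2},\frac{k+1}{2};\frac{2k+1}{2};-x^2\right)$, with ${}_2F_1$ the Gauss hypergeometric function. $P^0_l(\xi)=\frac{1}{2^l l!}\frac{d^l}{d\xi^l}(\xi^2-1)^l$ is the Legendre polynomial and $P^1_l(\xi)=(1-\xi^2)^{1/2}\frac{d}{d\xi}P^0_l(\xi)$ the associated Legendre function of order 1. These series are the gauge fields of the $\mathfrak{su}(\infty)$ Einstein–Yang–Mills solutions expanded in the anti-de Sitter radius $\ell$, with $x=r/\ell$. *)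

theory Defs
  imports "HOL-Analysis.Analysis"
begin

definition hyp2F1_series :: "real \<Rightarrow> real \<Rightarrow> real \<Rightarrow> real \<Rightarrow> real" where
  "hyp2F1_series a b c z =
     (\<Sum>n. pochhammer a n * pochhammer b n / (pochhammer c n * fact n) * z ^ n)"

text \<open>Gauss hypergeometric function on the real half-line z < 1: the power series
  for |z| < 1, and its analytic continuation via the Pfaff transformation
  2F1(a,b;c;z) = (1-z)^(-a) 2F1(a,c-b;c;z/(z-1)) for z <= -1
  (where z/(z-1) lies in [1/2,1)). Values for z >= 1 are never used.\<close>
definition hyp2F1 :: "real \<Rightarrow> real \<Rightarrow> real \<Rightarrow> real \<Rightarrow> real" where
  "hyp2F1 a b c z =
     (if \<bar>z\<bar> < 1 then hyp2F1_series a b c z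
      else (1 - z) powr (- a) * hyp2F1_series a (c - b) c (z / (z - 1)))"

definition calP :: "nat \<Rightarrow> real \<Rightarrow> real" where
  "calP k x = hyp2F1 (real k / 2) ((real k + 1) / 2) ((2 * real k + 3) / 2) (- (x ^ 2))"

definition calS :: "nat \<Rightarrow> real \<Rightarrow> real" where
  "calS k x = hyp2F1 (real k / 2) ((real k + 1) / 2) ((2 * real k + 1) / 2) (- (x ^ 2))"

definition legendreP :: "nat \<Rightarrow> real \<Rightarrow> real" where
  "legendreP l \<xi> = 1 / (2 ^ l * fact l) * (deriv ^^ l) (\<lambda>t. (t ^ 2 - 1) ^ l) \<xi>"

definition assocLegendre1 :: "nat \<Rightarrow> real \<Rightarrow> real" where
  "assocLegendre1 l \<xi> = sqrt (1 - \<xi> ^ 2) * deriv (legendreP l) \<xi>"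

end

theory Submission
  imports Defs "HOL-Computational_Algebra.Polynomial" "HOL-Real_Asymp.Real_Asymp"
begin

text \<open>On \<open>[-1, 1]\<close> Legendre's equation gives \<open>|P\<^sup>0\<^sub>l| \<le> 1\<close> and \<open>|P\<^sup>1\<^sub>l| \<le> l + 1\<close>. For \<open>x \<ge> 0\<close>
  the hypergeometric factors satisfy \<open>x\<^sup>k |\<P>\<^sub>k(x)|, x\<^sup>k |\<S>\<^sub>k(x)| \<le> 2\<^sup>k M(x)\<close> with \<open>M(x)\<close> independent
  of \<open>k\<close>: their Taylor coefficients (after a Pfaff transformation when \<open>x \<ge> 1\<close>) are dominated by those
  of \<open>\<^sub>2F\<^sub>1(k/2, (k+1)/2; k; z)\<close>, which are \<open>binomial (k + 2n - 1) n / 4\<^sup>n \<le> 2\<^sup>k\<close>. Hence the \<open>k\<close>-th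
  terms are bounded by \<open>M(x) (k + 1) |\<rho>\<^sub>k| (2\<ell>)\<^sup>k\<close> resp. the same with \<open>\<sigma>\<^sub>k\<close>, and these majorants are
  summable by the ratio test, their ratios tending to \<open>2\<ell>L < 1\<close>.\<close>

section \<open>Bounds on Legendre functions\<close>

lemma deriv_poly: "deriv (poly p) = poly (pderiv p)"
  by (rule ext) (rule DERIV_imp_deriv, rule poly_DERIV)

lemma higher_deriv_poly: "(deriv ^^ n) (poly p) = poly ((pderiv ^^ n) p)"
  by (induction n) (simp_all add: deriv_poly)

definition rodrigues_poly :: "nat \<Rightarrow> real poly" where
  "rodrigues_poly l = [:-1, 0, 1:] ^ l"

definition legendre_poly :: "nat \<Rightarrow> real poly" where
  "legendre_poly l = smult (1 / (2 ^ l * fact l)) ((pderiv ^^ l) (rodrigues_poly l))"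

lemma legendreP_eq_poly: "legendreP l = poly (legendre_poly l)"
proof -
  have "(\<lambda>t::real. (t ^ 2 - 1) ^ l) = poly (rodrigues_poly l)"
    by (simp add: rodrigues_poly_def power2_eq_square fun_eq_iff)
  then show ?thesis
    by (simp add: legendreP_def legendre_poly_def higher_deriv_poly fun_eq_iff)
qed

lemma rodrigues_poly_first_order_ode:
  "[:-1, 0, 1:] * pderiv (rodrigues_poly l) = smult (2 * real l) ([:0, 1:] * rodrigues_poly l)"
proof (cases l)
  case (Suc m)
  have "pderiv (rodrigues_poly l) = smult (of_nat (Suc m)) ([:-1, 0, 1:] ^ m) * [:0, 2:]"
    unfolding rodrigues_poly_def Suc pderiv_power_Suc by (simp add: pderiv_pCons)
  then show ?thesis
    by (simp add: rodrigues_poly_def Suc algebra_simps)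
qed (simp add: rodrigues_poly_def)

text \<open>The first-order equation differentiated \<open>m + 1\<close> times (Leibniz rule).\<close>
lemma rodrigues_poly_higher_ode:
  fixes l m :: nat
  defines "D \<equiv> \<lambda>j. (pderiv ^^ j) (rodrigues_poly l)"
  shows "[:-1, 0, 1:] * D (m + 2) + smult (2 * real (m + 1) - 2 * real l) ([:0, 1:] * D (m + 1))
    = smult (real (m + 1) * (2 * real l - real m)) (D m)"
proof (induction m)
  case 0
  have "pderiv ([:-1, 0, 1:] * pderiv (rodrigues_poly l))
      = pderiv (smult (2 * real l) ([:0, 1:] * rodrigues_poly l))"
    by (simp only: rodrigues_poly_first_order_ode)
  then have "poly (pderiv ([:-1, 0, 1:] * pderiv (rodrigues_poly l))) x
      = poly (pderiv (smult (2 * real l) ([:0, 1:] * rodrigues_poly l))) x" for x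
    by (simp only:)
  then show ?case
    by (intro poly_eq_poly_eq_iff[THEN iffD1] ext)
       (simp_all only: pderiv_mult pderiv_smult,
        simp add: D_def pderiv_pCons numeral_2_eq_2 algebra_simps)
next
  case (Suc m)
  then have "poly (pderiv ([:-1, 0, 1:] * D (m + 2)
        + smult (2 * real (m + 1) - 2 * real l) ([:0, 1:] * D (m + 1)))) x
      = poly (pderiv (smult (real (m + 1) * (2 * real l - real m)) (D m))) x" for x
    by (simp only:)
  then show ?case
    by (intro poly_eq_poly_eq_iff[THEN iffD1] ext)
       (simp_all only: pderiv_mult pderiv_smult pderiv_add,
        simp add: D_def pderiv_pCons numeral_2_eq_2 algebra_simps)
qed

lemma legendre_poly_ode:
  "(x\<^sup>2 - 1) * poly (pderiv (pderiv (legendre_poly l))) x + 2 * x * poly (pderiv (legendre_poly l)) x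
     = real l * (real l + 1) * poly (legendre_poly l) x"
proof -
  define D where "D = (\<lambda>j. (pderiv ^^ j) (rodrigues_poly l))"
  have "poly ([:-1, 0, 1:] * D (l + 2) + smult (2 * real (l + 1) - 2 * real l) ([:0, 1:] * D (l + 1))) x
      = poly (smult (real (l + 1) * (2 * real l - real l)) (D l)) x"
    using rodrigues_poly_higher_ode[of l l] by (simp only: D_def)
  then have "(x\<^sup>2 - 1) * poly (D (l + 2)) x + 2 * x * poly (D (l + 1)) x
      = real l * (real l + 1) * poly (D l) x"
    by (simp add: power2_eq_square algebra_simps)
  then show ?thesis
    by (simp add: legendre_poly_def D_def pderiv_smult field_simps)
qed

lemma higher_pderiv_at_root:
  "poly ((pderiv ^^ m) ([:-a, 1:] ^ m * q)) (a :: real) = fact m * poly q a"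
proof (induction m arbitrary: q)
  case (Suc m)
  define r where "r = smult (of_nat (Suc m)) q + [:-a, 1:] * pderiv q"
  have "pderiv ([:-a, 1:] ^ Suc m * q) = [:-a, 1:] ^ m * r"
    unfolding r_def
    by (intro poly_eq_poly_eq_iff[THEN iffD1] ext)
       (simp_all only: pderiv_mult pderiv_power_Suc, simp add: pderiv_pCons algebra_simps)
  then have "poly ((pderiv ^^ Suc m) ([:-a, 1:] ^ Suc m * q)) a = poly ((pderiv ^^ m) ([:-a, 1:] ^ m * r)) a"
    by (simp add: funpow_Suc_right del: funpow.simps)
  also have "\<dots> = fact m * poly r a"
    by (rule Suc.IH)
  also have "\<dots> = fact (Suc m) * poly q a"
    by (simp add: r_def algebra_simps)
  finally show ?case .
qed simp

lemma rodrigues_poly_factor: "rodrigues_poly l = [:-1, 1:] ^ l * [:1, 1:] ^ l"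
  by (simp add: rodrigues_poly_def power_mult_distrib[symmetric])

lemma legendre_poly_at_1: "poly (legendre_poly l) 1 = 1"
  using higher_pderiv_at_root[of l 1 "[:1, 1:] ^ l"]
  by (simp add: legendre_poly_def rodrigues_poly_factor poly_power)

lemma legendre_poly_at_minus_1: "poly (legendre_poly l) (-1) = (-1) ^ l"
  using higher_pderiv_at_root[of l "-1" "[:-1, 1:] ^ l"]
  by (simp add: legendre_poly_def rodrigues_poly_factor mult.commute poly_power power_minus')

text \<open>The energy \<open>P\<^sup>2 + (1 - t\<^sup>2) P'\<^sup>2 / (l (l + 1))\<close> has derivative \<open>2 t P'\<^sup>2 / (l (l + 1))\<close>
  by Legendre's equation, so on \<open>[-1, 1]\<close> it is maximal at the endpoints, where it equals \<open>P(\<plusminus>1)\<^sup>2 = 1\<close>.\<close>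
lemma legendre_poly_energy_le_1:
  assumes l: "l \<ge> 1" and t: "-1 \<le> t" "t \<le> 1"
  shows "poly (legendre_poly l) t ^ 2
    + (1 - t\<^sup>2) * poly (pderiv (legendre_poly l)) t ^ 2 / (real l * (real l + 1)) \<le> 1"
proof -
  define K where "K = real l * (real l + 1)"
  define P where "P = poly (legendre_poly l)"
  define P' where "P' = poly (pderiv (legendre_poly l))"
  define P'' where "P'' = poly (pderiv (pderiv (legendre_poly l)))"
  define E where "E = (\<lambda>t. P t ^ 2 + (1 - t\<^sup>2) * P' t ^ 2 / K)"
  have K: "K > 0"
    using l by (simp add: K_def)
  have ode: "(1 - s\<^sup>2) * P'' s = 2 * s * P' s - K * P s" for s
    using legendre_poly_ode[of s l] by (simp add: P_def P'_def P''_def K_def algebra_simps)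
  have E_deriv: "(E has_real_derivative 2 * s * P' s ^ 2 / K) (at s)" for s
  proof -
    have "2 * P s * P' s + (- 2 * s * P' s ^ 2 + 2 * P' s * ((1 - s\<^sup>2) * P'' s)) / K
        = 2 * s * P' s ^ 2 / K"
    proof -
      have "2 * P' s * ((1 - s\<^sup>2) * P'' s) = 2 * P' s * (2 * s * P' s - K * P s)"
        by (simp add: ode)
      then show ?thesis
        using K by (simp add: field_simps power2_eq_square)
    qed
    then show ?thesis
      unfolding E_def P_def P'_def P''_def using K
      by (auto intro!: derivative_eq_intros poly_DERIV simp: power2_eq_square field_simps)
  qed
  have E_endpoints: "E 1 = 1" "E (-1) = 1"
    by (simp_all add: E_def P_def legendre_poly_at_1 legendre_poly_at_minus_1
        power_mult[symmetric] mult.commute[of l 2])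
  show ?thesis
  proof (cases "t \<ge> 0")
    case True
    have "E t \<le> E 1"
      by (rule DERIV_nonneg_imp_nondecreasing[OF t(2)])
         (use E_deriv K True in \<open>auto intro!: exI divide_nonneg_pos\<close>)
    then show ?thesis
      using E_endpoints by (simp add: E_def P_def P'_def K_def)
  next
    case False
    have E_deriv_nonpos: "2 * s * P' s ^ 2 / K \<le> 0" if "s \<le> 0" for s
      using that K by (simp add: divide_nonpos_pos mult_nonpos_nonneg)
    have "E t \<le> E (-1)"
      by (rule DERIV_nonpos_imp_nonincreasing[OF t(1)])
         (use E_deriv E_deriv_nonpos False in \<open>auto intro!: exI\<close>)
    then show ?thesis
      using E_endpoints by (simp add: E_def P_def P'_def K_def)
  qed
qed

lemma abs_legendreP_le_1:
  assumes "l \<ge> 1" "\<xi> \<in> {-1..1}"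
  shows "\<bar>legendreP l \<xi>\<bar> \<le> 1"
proof -
  have "0 \<le> (1 - \<xi>\<^sup>2) * poly (pderiv (legendre_poly l)) \<xi> ^ 2 / (real l * (real l + 1))"
    using assms(2) by (auto intro!: divide_nonneg_nonneg simp: abs_square_le_1)
  then have "poly (legendre_poly l) \<xi> ^ 2 \<le> 1"
    using legendre_poly_energy_le_1[of l \<xi>] assms by auto
  then show ?thesis
    by (simp add: legendreP_eq_poly abs_square_le_1)
qed

lemma abs_assocLegendre1_le:
  assumes "l \<ge> 1" "\<xi> \<in> {-1..1}"
  shows "\<bar>assocLegendre1 l \<xi>\<bar> \<le> real l + 1"
proof -
  have \<xi>: "-1 \<le> \<xi>" "\<xi> \<le> 1"
    using assms(2) by auto
  have "(1 - \<xi>\<^sup>2) * poly (pderiv (legendre_poly l)) \<xi> ^ 2 / (real l * (real l + 1)) \<le> 1"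
    using legendre_poly_energy_le_1[OF assms(1) \<xi>] zero_le_power2[of "poly (legendre_poly l) \<xi>"]
    by linarith
  then have "(1 - \<xi>\<^sup>2) * poly (pderiv (legendre_poly l)) \<xi> ^ 2 \<le> real l * (real l + 1)"
    using assms(1) by (simp add: pos_divide_le_eq)
  also have "\<dots> \<le> (real l + 1)\<^sup>2"
    by (simp add: power2_eq_square)
  finally have "\<bar>assocLegendre1 l \<xi>\<bar>\<^sup>2 \<le> (real l + 1)\<^sup>2"
    using \<xi> by (simp add: assocLegendre1_def legendreP_eq_poly deriv_poly power_mult_distrib abs_square_le_1)
  then show ?thesis
    by (rule power2_le_imp_le) simp
qed

section \<open>Bounds on the hypergeometric factors\<close>

definition hyp2F1_coeff :: "real \<Rightarrow> real \<Rightarrow> real \<Rightarrow> nat \<Rightarrow> real" where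
  "hyp2F1_coeff a b c n = pochhammer a n * pochhammer b n / (pochhammer c n * fact n)"

lemma hyp2F1_series_eq: "hyp2F1_series a b c z = (\<Sum>n. hyp2F1_coeff a b c n * z ^ n)"
  by (simp add: hyp2F1_series_def hyp2F1_coeff_def)

lemma hyp2F1_coeff_Suc:
  "c > 0 \<Longrightarrow> hyp2F1_coeff a b c (Suc n)
     = hyp2F1_coeff a b c n * ((a + real n) * (b + real n) / ((c + real n) * (real n + 1)))"
  by (simp add: hyp2F1_coeff_def pochhammer_Suc pochhammer_eq_0_iff field_simps)

lemma hyp2F1_coeff_nonneg: "a > 0 \<Longrightarrow> b > 0 \<Longrightarrow> c > 0 \<Longrightarrow> hyp2F1_coeff a b c n \<ge> 0"
  by (simp add: hyp2F1_coeff_def pochhammer_pos less_imp_le)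

lemma hyp2F1_coeff_mono:
  assumes pos: "a > 0" "b > 0" "c > 0" "a' > 0" "b' > 0" "c' > 0"
    and ratio_le: "\<And>n::nat. (a + real n) * (b + real n) * (c' + real n)
        \<le> (a' + real n) * (b' + real n) * (c + real n)"
  shows "hyp2F1_coeff a b c n \<le> hyp2F1_coeff a' b' c' n"
proof (induction n)
  case (Suc n)
  have "(a + real n) * (b + real n) / ((c + real n) * (real n + 1))
      \<le> (a' + real n) * (b' + real n) / ((c' + real n) * (real n + 1))"
    using ratio_le[of n] pos by (simp add: divide_simps mult_right_mono mult.commute mult.left_commute)
  then show ?case
    using Suc pos unfolding hyp2F1_coeff_Suc[OF pos(3)] hyp2F1_coeff_Suc[OF pos(6)]
    by (intro mult_mono hyp2F1_coeff_nonneg divide_nonneg_pos) auto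
qed (simp add: hyp2F1_coeff_def)

text \<open>By Legendre's duplication formula the coefficients are \<open>binomial (k + 2n - 1) n / 4\<^sup>n\<close>.\<close>
lemma hyp2F1_coeff_half_le_pow2:
  assumes k: "k \<ge> 1"
  shows "hyp2F1_coeff (real k / 2) ((real k + 1) / 2) (real k) n \<le> 2 ^ k"
proof -
  have "pochhammer (real k) (2 * n) = 4 ^ n * pochhammer (real k / 2) n * pochhammer ((real k + 1) / 2) n"
    using pochhammer_double[of "real k / 2" n] by (simp add: add_divide_distrib power_mult)
  moreover have "pochhammer (real k) (2 * n) = pochhammer (real k) n * pochhammer (real k + real n) n"
    using pochhammer_product'[of "real k" n n] by (simp add: mult_2)
  moreover have "pochhammer (real k) n > 0"
    using k by (intro pochhammer_pos) simp
  ultimately have coeff_eq: "hyp2F1_coeff (real k / 2) ((real k + 1) / 2) (real k) n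
      = pochhammer (real k + real n) n / fact n / 4 ^ n"
    by (simp add: hyp2F1_coeff_def field_simps)
  have "pochhammer (real k + real n) n / fact n = real ((k + 2 * n - 1) choose n)"
    using k by (simp add: binomial_gbinomial gbinomial_pochhammer' of_nat_diff algebra_simps)
  also have "\<dots> \<le> 2 ^ (k + 2 * n)"
  proof -
    have "(k + 2 * n - 1) choose n \<le> (2 :: nat) ^ (k + 2 * n)"
      using binomial_le_pow2 power_increasing[of "k + 2 * n - 1" "k + 2 * n" "2 :: nat"]
      by (meson diff_le_self le_trans one_le_numeral)
    then show ?thesis
      by (metis of_nat_le_iff of_nat_numeral of_nat_power)
  qed
  finally have "hyp2F1_coeff (real k / 2) ((real k + 1) / 2) (real k) n \<le> 2 ^ (k + 2 * n) / 4 ^ n"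
    unfolding coeff_eq by (rule divide_right_mono) simp
  also have "\<dots> = 2 ^ k"
    by (simp add: power_add power_mult)
  finally show ?thesis .
qed

lemma abs_hyp2F1_series_le:
  assumes z: "\<bar>z\<bar> < 1" and coeff: "\<And>n. 0 \<le> hyp2F1_coeff a b c n" "\<And>n. hyp2F1_coeff a b c n \<le> B"
  shows "\<bar>hyp2F1_series a b c z\<bar> \<le> B / (1 - \<bar>z\<bar>)"
proof -
  have geometric: "summable (\<lambda>n. B * \<bar>z\<bar> ^ n)"
    using z by (simp add: summable_geometric)
  have term_le: "norm (hyp2F1_coeff a b c n * z ^ n) \<le> B * \<bar>z\<bar> ^ n" for n
    using coeff[of n] by (simp add: abs_mult power_abs mult_right_mono)
  have "\<bar>hyp2F1_series a b c z\<bar> \<le> (\<Sum>n. B * \<bar>z\<bar> ^ n)"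
    unfolding hyp2F1_series_eq using norm_suminf_le[OF term_le geometric] by simp
  also have "\<dots> = B / (1 - \<bar>z\<bar>)"
    using z by (simp add: suminf_mult suminf_geometric divide_simps)
  finally show ?thesis .
qed

lemma hyp2F1_coeff_le_pow2:
  assumes k: "k \<ge> 1" and pos: "b > 0" "c > 0"
    and ratio_le: "\<And>n::nat. (b + real n) * (real k + real n) \<le> ((real k + 1) / 2 + real n) * (c + real n)"
  shows "hyp2F1_coeff (real k / 2) b c n \<le> 2 ^ k"
proof -
  have "hyp2F1_coeff (real k / 2) b c n \<le> hyp2F1_coeff (real k / 2) ((real k + 1) / 2) (real k) n"
  proof (rule hyp2F1_coeff_mono)
    fix n :: nat
    show "(real k / 2 + real n) * (b + real n) * (real k + real n)
        \<le> (real k / 2 + real n) * ((real k + 1) / 2 + real n) * (c + real n)"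
      using mult_left_mono[OF ratio_le[of n], of "real k / 2 + real n"] by (simp add: mult.assoc)
  qed (use k pos in auto)
  then show ?thesis
    using hyp2F1_coeff_half_le_pow2[OF k, of n] by linarith
qed

lemma power_le_one_plus_square_powr:
  assumes "x > 0"
  shows "x ^ k \<le> (1 + x\<^sup>2) powr (real k / 2)"
proof -
  have "x ^ k = x powr (2 * (real k / 2))"
    using assms by (simp add: powr_realpow)
  also have "\<dots> = (x powr 2) powr (real k / 2)"
    by (simp add: powr_powr)
  also have "\<dots> = (x\<^sup>2) powr (real k / 2)"
    using assms by (simp add: powr_numeral)
  also have "\<dots> \<le> (1 + x\<^sup>2) powr (real k / 2)"
    by (intro powr_mono2) auto
  finally show ?thesis .
qed

lemma abs_hyp2F1_neg_square_le_inside: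
  assumes k: "k \<ge> 1" and c: "c \<ge> real k" and x: "0 \<le> x" "x < 1"
  shows "\<bar>hyp2F1 (real k / 2) ((real k + 1) / 2) c (- x\<^sup>2)\<bar> \<le> 2 ^ k / (1 - x\<^sup>2)"
proof -
  have "x\<^sup>2 < 1"
    using x by (simp add: abs_square_less_1)
  moreover have "hyp2F1_coeff (real k / 2) ((real k + 1) / 2) c n \<le> 2 ^ k" for n
    by (rule hyp2F1_coeff_le_pow2) (use k c in \<open>auto intro: mult_left_mono\<close>)
  ultimately show ?thesis
    using abs_hyp2F1_series_le[of "- x\<^sup>2" "real k / 2" "(real k + 1) / 2" c "2 ^ k"] k c
    by (simp add: hyp2F1_def hyp2F1_coeff_nonneg)
qed

text \<open>Outside the unit disc the definition of \<^const>\<open>hyp2F1\<close> goes through the Pfaff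
  transformation, whose argument \<open>x\<^sup>2 / (1 + x\<^sup>2)\<close> has distance \<open>1 / (1 + x\<^sup>2)\<close> from \<open>1\<close>.\<close>
lemma abs_hyp2F1_neg_square_le_outside:
  assumes k: "k \<ge> 1" and c: "c > (real k + 1) / 2"
    and ratio_le: "\<And>n::nat. (c - (real k + 1) / 2 + real n) * (real k + real n)
      \<le> ((real k + 1) / 2 + real n) * (c + real n)"
    and x: "x \<ge> 1"
  shows "x ^ k * \<bar>hyp2F1 (real k / 2) ((real k + 1) / 2) c (- x\<^sup>2)\<bar> \<le> 2 ^ k * (1 + x\<^sup>2)"
proof -
  define w where "w = x\<^sup>2 / (1 + x\<^sup>2)"
  have "1 \<le> x\<^sup>2"
    using x one_le_power[of x 2] by simp
  then have x_sq: "1 \<le> x\<^sup>2" "1 + x\<^sup>2 > 0"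
    by simp_all
  have w: "0 \<le> w" "w < 1" "1 - \<bar>w\<bar> = 1 / (1 + x\<^sup>2)"
    using x_sq by (simp_all add: w_def divide_simps)
  have "- x\<^sup>2 / (- x\<^sup>2 - 1) = w"
    using x_sq by (simp add: w_def divide_simps) (simp add: algebra_simps)
  then have pfaff: "hyp2F1 (real k / 2) ((real k + 1) / 2) c (- x\<^sup>2)
      = (1 + x\<^sup>2) powr (- (real k / 2)) * hyp2F1_series (real k / 2) (c - (real k + 1) / 2) c w"
    using x_sq by (simp add: hyp2F1_def)
  have "hyp2F1_coeff (real k / 2) (c - (real k + 1) / 2) c n \<le> 2 ^ k" for n
    by (rule hyp2F1_coeff_le_pow2[OF k _ _ ratio_le]) (use c in auto)
  then have series_le: "\<bar>hyp2F1_series (real k / 2) (c - (real k + 1) / 2) c w\<bar> \<le> 2 ^ k * (1 + x\<^sup>2)"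
    using abs_hyp2F1_series_le[of w "real k / 2" "c - (real k + 1) / 2" c "2 ^ k"] w k c
    by (simp add: hyp2F1_coeff_nonneg)
  have "x ^ k * (1 + x\<^sup>2) powr (- (real k / 2)) \<le> 1"
    using power_le_one_plus_square_powr[of x k] x x_sq by (simp add: powr_minus divide_simps)
  then have "x ^ k * \<bar>hyp2F1 (real k / 2) ((real k + 1) / 2) c (- x\<^sup>2)\<bar>
      \<le> 1 * \<bar>hyp2F1_series (real k / 2) (c - (real k + 1) / 2) c w\<bar>"
    unfolding pfaff abs_mult mult.assoc[symmetric] using x by (intro mult_right_mono) auto
  then show ?thesis
    using series_le by simp
qed

lemma hyp2F1_neg_square_envelope:
  assumes k: "k \<ge> 1" and c: "c \<ge> real k" "c > (real k + 1) / 2"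
    and ratio_le: "\<And>n::nat. (c - (real k + 1) / 2 + real n) * (real k + real n)
      \<le> ((real k + 1) / 2 + real n) * (c + real n)"
    and x: "x \<ge> 0"
  shows "x ^ k * \<bar>hyp2F1 (real k / 2) ((real k + 1) / 2) c (- x\<^sup>2)\<bar>
    \<le> 2 ^ k * (if x < 1 then 1 / (1 - x\<^sup>2) else 1 + x\<^sup>2)"
proof (cases "x < 1")
  case True
  then have "x ^ k * \<bar>hyp2F1 (real k / 2) ((real k + 1) / 2) c (- x\<^sup>2)\<bar> \<le> 1 * (2 ^ k / (1 - x\<^sup>2))"
    using abs_hyp2F1_neg_square_le_inside[OF k c(1) x True] x
    by (intro mult_mono) (auto simp: power_le_one)
  then show ?thesis
    using True by simp
next
  case False
  then show ?thesis
    using abs_hyp2F1_neg_square_le_outside[OF k c(2) ratio_le] by simp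
qed

lemma calP_envelope:
  assumes "k \<ge> 1" "x \<ge> 0"
  shows "x ^ k * \<bar>calP k x\<bar> \<le> 2 ^ k * (if x < 1 then 1 / (1 - x\<^sup>2) else 1 + x\<^sup>2)"
  unfolding calP_def
proof (rule hyp2F1_neg_square_envelope)
  fix n :: nat
  show "((2 * real k + 3) / 2 - (real k + 1) / 2 + real n) * (real k + real n)
      \<le> ((real k + 1) / 2 + real n) * ((2 * real k + 3) / 2 + real n)"
    by (simp add: field_simps)
qed (use assms in auto)

lemma calS_envelope:
  assumes "k \<ge> 1" "x \<ge> 0"
  shows "x ^ k * \<bar>calS k x\<bar> \<le> 2 ^ k * (if x < 1 then 1 / (1 - x\<^sup>2) else 1 + x\<^sup>2)"
  unfolding calS_def
proof (rule hyp2F1_neg_square_envelope)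
  fix n :: nat
  show "((2 * real k + 1) / 2 - (real k + 1) / 2 + real n) * (real k + real n)
      \<le> ((real k + 1) / 2 + real n) * ((2 * real k + 1) / 2 + real n)"
    by (simp add: field_simps)
qed (use assms in auto)

section \<open>Summability\<close>

lemma summable_ratio_tendsto:
  fixes g :: "nat \<Rightarrow> real"
  assumes nonzero: "eventually (\<lambda>k. g k \<noteq> 0) sequentially"
    and ratio: "((\<lambda>k. \<bar>g (Suc k) / g k\<bar>) \<longlongrightarrow> r) sequentially" and r: "r < 1"
  shows "summable g"
proof -
  have "eventually (\<lambda>k. \<bar>g (Suc k) / g k\<bar> < (1 + r) / 2 \<and> g k \<noteq> 0) sequentially"
    using order_tendstoD(2)[OF ratio, of "(1 + r) / 2"] nonzero r by (auto intro: eventually_conj)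
  then obtain N where N: "\<And>k. k \<ge> N \<Longrightarrow> \<bar>g (Suc k) / g k\<bar> < (1 + r) / 2 \<and> g k \<noteq> 0"
    unfolding eventually_sequentially by blast
  have "norm (g (Suc k)) \<le> (1 + r) / 2 * norm (g k)" if "k \<ge> N" for k
  proof -
    have "\<bar>g k\<bar> > 0" "\<bar>g (Suc k)\<bar> / \<bar>g k\<bar> < (1 + r) / 2"
      using N[OF that] by (auto simp: abs_divide)
    then show ?thesis
      using pos_divide_less_eq[of "\<bar>g k\<bar>" "\<bar>g (Suc k)\<bar>" "(1 + r) / 2"] by simp
  qed
  then show ?thesis
    using r by (intro summable_ratio_test[of "(1 + r) / 2" N]) auto
qed

lemma summable_weighted_of_ratio_tendsto:
  fixes f :: "nat \<Rightarrow> real"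
  assumes ell: "ell > 0" and nonzero: "eventually (\<lambda>k. f k \<noteq> 0) sequentially"
    and ratio: "((\<lambda>k. \<bar>f (k + 1) / f k\<bar>) \<longlongrightarrow> L) sequentially" and L: "L < 1 / (2 * ell)"
  shows "summable (\<lambda>k. (real k + 1) * \<bar>f k\<bar> * (2 * ell) ^ k)"
proof (rule summable_ratio_tendsto)
  show "eventually (\<lambda>k. (real k + 1) * \<bar>f k\<bar> * (2 * ell) ^ k \<noteq> 0) sequentially"
    using nonzero by eventually_elim (use ell in simp)
  have "((\<lambda>k. (real k + 2) / (real k + 1)) \<longlongrightarrow> 1) sequentially"
    by real_asymp
  then have "((\<lambda>k. (real k + 2) / (real k + 1) * \<bar>f (k + 1) / f k\<bar> * (2 * ell)) \<longlongrightarrow> 1 * L * (2 * ell))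
      sequentially"
    by (intro tendsto_intros ratio)
  moreover have "eventually (\<lambda>k. (real k + 2) / (real k + 1) * \<bar>f (k + 1) / f k\<bar> * (2 * ell)
      = \<bar>(real (Suc k) + 1) * \<bar>f (Suc k)\<bar> * (2 * ell) ^ Suc k / ((real k + 1) * \<bar>f k\<bar> * (2 * ell) ^ k)\<bar>)
      sequentially"
    using nonzero by eventually_elim (use ell in \<open>simp add: abs_divide abs_mult divide_simps del: power_mult_distrib\<close>)
  ultimately show "((\<lambda>k. \<bar>(real (Suc k) + 1) * \<bar>f (Suc k)\<bar> * (2 * ell) ^ Suc k
      / ((real k + 1) * \<bar>f k\<bar> * (2 * ell) ^ k)\<bar>) \<longlongrightarrow> 2 * ell * L) sequentially"
    by (simp add: tendsto_cong mult.commute)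
  show "2 * ell * L < 1"
    using L ell by (simp add: field_simps)
qed

lemma summable_envelope_comparison:
  fixes c h p :: "nat \<Rightarrow> real"
  assumes summable: "summable (\<lambda>k. (real k + 1) * \<bar>c k\<bar> * (2 * ell) ^ k)" and ell: "ell \<ge> 0"
    and h: "eventually (\<lambda>k. \<bar>h k\<bar> \<le> 2 ^ k * M) sequentially"
    and p: "eventually (\<lambda>k. \<bar>p k\<bar> \<le> real k + 1) sequentially"
  shows "summable (\<lambda>k. c k * (h k * p k) * ell ^ k)"
proof (rule summable_comparison_test_ev)
  show "eventually (\<lambda>k. norm (c k * (h k * p k) * ell ^ k)
      \<le> M * ((real k + 1) * \<bar>c k\<bar> * (2 * ell) ^ k)) sequentially"
    using h p
  proof eventually_elim
    case (elim k)
    then have "\<bar>h k\<bar> * \<bar>p k\<bar> \<le> 2 ^ k * M * (real k + 1)"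
      by (intro mult_mono) auto
    then have "\<bar>c k\<bar> * (\<bar>h k\<bar> * \<bar>p k\<bar>) * ell ^ k \<le> \<bar>c k\<bar> * (2 ^ k * M * (real k + 1)) * ell ^ k"
      using ell by (intro mult_right_mono mult_left_mono) auto
    then show ?case
      using ell by (simp add: abs_mult power_mult_distrib mult_ac)
  qed
  show "summable (\<lambda>k. M * ((real k + 1) * \<bar>c k\<bar> * (2 * ell) ^ k))"
    using summable by (rule summable_mult)
qed

theorem proposition2:
  fixes ell :: real and \<rho> \<sigma> :: "nat \<Rightarrow> real" and x \<xi> :: real
  assumes "ell > 0"
    and "eventually (\<lambda>k. \<sigma> k \<noteq> 0) sequentially"
    and "eventually (\<lambda>k. \<rho> k \<noteq> 0) sequentially"
    and "\<exists>L. ((\<lambda>k. \<bar>\<sigma> (k + 1) / \<sigma> k\<bar>) \<longlongrightarrow> L) sequentially \<and> L < 1 / (2 * ell)"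
    and "\<exists>L. ((\<lambda>k. \<bar>\<rho> (k + 1) / \<rho> k\<bar>) \<longlongrightarrow> L) sequentially \<and> L < 1 / (2 * ell)"
    and "x \<ge> 0" and "\<xi> \<in> {-1..1}"
  shows "summable (\<lambda>k. \<rho> (k + 1) * calP (k + 1) x * legendreP (k + 1) \<xi> * (x * ell) ^ (k + 1)) \<and>
         summable (\<lambda>k. \<sigma> (k + 2) * calS (k + 2) x * assocLegendre1 (k + 1) \<xi> * (x * ell) ^ (k + 2))"
proof -
  define M where "M = (if x < 1 then 1 / (1 - x\<^sup>2) else 1 + x\<^sup>2)"
  have \<rho>_weighted: "summable (\<lambda>k. (real k + 1) * \<bar>\<rho> k\<bar> * (2 * ell) ^ k)"
    using assms(5) summable_weighted_of_ratio_tendsto[OF assms(1,3)] by blast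
  have \<sigma>_weighted: "summable (\<lambda>k. (real k + 1) * \<bar>\<sigma> k\<bar> * (2 * ell) ^ k)"
    using assms(4) summable_weighted_of_ratio_tendsto[OF assms(1,2)] by blast
  have "summable (\<lambda>n. \<rho> n * (x ^ n * calP n x * legendreP n \<xi>) * ell ^ n)"
  proof (rule summable_envelope_comparison[OF \<rho>_weighted])
    show "eventually (\<lambda>n. \<bar>x ^ n * calP n x\<bar> \<le> 2 ^ n * M) sequentially"
      by (rule eventually_sequentiallyI[of 1]) (use calP_envelope assms(6) in \<open>simp add: M_def abs_mult\<close>)
    show "eventually (\<lambda>n. \<bar>legendreP n \<xi>\<bar> \<le> real n + 1) sequentially"
      by (rule eventually_sequentiallyI[of 1]) (use abs_legendreP_le_1 assms(7) in force)
  qed (use assms(1) in simp)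
  from summable_ignore_initial_segment[OF this, of 1]
  have "summable (\<lambda>k. \<rho> (k + 1) * calP (k + 1) x * legendreP (k + 1) \<xi> * (x * ell) ^ (k + 1))"
    by (simp add: power_mult_distrib mult_ac)
  moreover have "summable (\<lambda>n. \<sigma> n * (x ^ n * calS n x * assocLegendre1 (n - 1) \<xi>) * ell ^ n)"
  proof (rule summable_envelope_comparison[OF \<sigma>_weighted])
    show "eventually (\<lambda>n. \<bar>x ^ n * calS n x\<bar> \<le> 2 ^ n * M) sequentially"
      by (rule eventually_sequentiallyI[of 1]) (use calS_envelope assms(6) in \<open>simp add: M_def abs_mult\<close>)
    show "eventually (\<lambda>n. \<bar>assocLegendre1 (n - 1) \<xi>\<bar> \<le> real n + 1) sequentially"
    proof (rule eventually_sequentiallyI[of 2])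
      fix n :: nat
      assume "n \<ge> 2"
      then show "\<bar>assocLegendre1 (n - 1) \<xi>\<bar> \<le> real n + 1"
        using abs_assocLegendre1_le[of "n - 1" \<xi>] assms(7) by (fastforce simp: of_nat_diff)
    qed
  qed (use assms(1) in simp)
  from summable_ignore_initial_segment[OF this, of 2]
  have "summable (\<lambda>k. \<sigma> (k + 2) * calS (k + 2) x * assocLegendre1 (k + 1) \<xi> * (x * ell) ^ (k + 2))"
    by (simp add: power_mult_distrib mult_ac)
  ultimately show ?thesis ..
qed

end
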